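(* Let $G$ be a simple, undirected, connected graph on $N$ vertices with degree sequence $d_1\le d_2\le\cdots\le d_N$, and let $H=\sum_{1\le i<j\le N}\frac{d_j}{d_i}$. Then $$R^+(G)\ge N(N-3)+H+\left[\frac{N(N-1)}{2}\right]^2\frac{1}{H}.$$
   Context: For vertices $i,j$ of $G$, $R_{ij}$ denotes the effective resistance between $i$ and $j$ when every edge of $G$ is a unit resistor. The additive degree-Kirchhoff index is $R^+(G)=\sum_{i<j}(d_i+d_j)R_{ij}$, where $d_i$ is the degree of vertex $i$. *)

theory Defs
  imports Complex_Main
begin

text \<open>A simple undirected graph on the vertex set {0..<N} is given by an
  adjacency relation E that is symmetric and irreflexive (only its values on
  {0..<N} matter).\<close>

definition simple_graph :: "nat \<Rightarrow> (nat \<Rightarrow> nat \<Rightarrow> bool) \<Rightarrow> bool" where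
  "simple_graph N E \<longleftrightarrow> (\<forall>i<N. \<forall>j<N. E i j \<longleftrightarrow> E j i) \<and> (\<forall>i<N. \<not> E i i)"

definition edges_on :: "nat \<Rightarrow> (nat \<Rightarrow> nat \<Rightarrow> bool) \<Rightarrow> (nat \<times> nat) set" where
  "edges_on N E = {(a, b). a < N \<and> b < N \<and> E a b}"

definition connected_graph :: "nat \<Rightarrow> (nat \<Rightarrow> nat \<Rightarrow> bool) \<Rightarrow> bool" where
  "connected_graph N E \<longleftrightarrow> (\<forall>i<N. \<forall>j<N. (i, j) \<in> (edges_on N E)\<^sup>*)"

definition deg :: "nat \<Rightarrow> (nat \<Rightarrow> nat \<Rightarrow> bool) \<Rightarrow> nat \<Rightarrow> nat" where
  "deg N E i = card {j. j < N \<and> E i j}"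

definition laplacian_app :: "nat \<Rightarrow> (nat \<Rightarrow> nat \<Rightarrow> bool) \<Rightarrow> (nat \<Rightarrow> real) \<Rightarrow> nat \<Rightarrow> real" where
  "laplacian_app N E phi k = real (deg N E k) * phi k - (\<Sum>j\<in>{j. j < N \<and> E k j}. phi j)"

text \<open>Effective resistance between i and j (every edge a unit resistor):
  the potential difference phi i - phi j produced by injecting a unit current at i
  and extracting it at j, i.e. for a potential phi with L phi = e_i - e_j
  (Kirchhoff/Ohm). For a connected graph phi is unique up to an additive constant,
  so the potential difference is well defined.\<close>
definition eff_res :: "nat \<Rightarrow> (nat \<Rightarrow> nat \<Rightarrow> bool) \<Rightarrow> nat \<Rightarrow> nat \<Rightarrow> real" where
  "eff_res N E i j =
     (let phi = (SOME phi. \<forall>k<N. laplacian_app N E phi k =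
                    (if k = i then 1 else 0) - (if k = j then 1 else 0))
      in phi i - phi j)"

definition add_deg_kirchhoff :: "nat \<Rightarrow> (nat \<Rightarrow> nat \<Rightarrow> bool) \<Rightarrow> real" where
  "add_deg_kirchhoff N E =
     (\<Sum>i<N. \<Sum>j\<in>{i<..<N}. real (deg N E i + deg N E j) * eff_res N E i j)"

end

theory Submission
  imports Defs "Jordan_Normal_Form.Determinant" "HOL-Analysis.Convex"
begin

text \<open>Let \<phi> be the potential of a unit current from i to j. Its energy, the sum of the squared
  potential drops over all edges, equals R_ij = \<phi> i - \<phi> j. Keeping only the edges at i and at j
  and applying Cauchy--Schwarz to the unit current leaving i and entering j gives
  R_ij \<ge> 1/d_i + 1/d_j - 2/(d_i d_j) when i and j are adjacent, and R_ij \<ge> 1/d_i + 1/d_j otherwise.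
  Weighted by d_i + d_j and summed over all pairs, these bounds give
  R^+(G) \<ge> N(N - 1) + H + H' - 2N with H' = \<Sum>_{i<j} d_i/d_j, since each edge contributes
  2/d_i + 2/d_j and these contributions add up to 2N. Finally H H' \<ge> (N(N - 1)/2)^2 by
  Cauchy--Schwarz once more.\<close>

definition neighbours :: "nat \<Rightarrow> (nat \<Rightarrow> nat \<Rightarrow> bool) \<Rightarrow> nat \<Rightarrow> nat set" where
  "neighbours N E k = {l. l < N \<and> E k l}"

lemma finite_neighbours [simp]: "finite (neighbours N E k)"
  by (simp add: neighbours_def)

lemma deg_eq_card_neighbours: "deg N E k = card (neighbours N E k)"
  by (simp add: deg_def neighbours_def)

lemma sum_neighbours:
  "(\<Sum>l\<in>neighbours N E k. f l) = (\<Sum>l<N. if E k l then f l else (0::'a::comm_monoid_add))"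
proof -
  have "neighbours N E k = {l \<in> {..<N}. E k l}"
    by (auto simp: neighbours_def)
  then show ?thesis
    by (simp only: sum.inter_filter[OF finite_lessThan])
qed

lemma laplacian_app_eq_sum_neighbours:
  "laplacian_app N E \<phi> k = (\<Sum>l\<in>neighbours N E k. \<phi> k - \<phi> l)"
  by (simp add: laplacian_app_def deg_eq_card_neighbours sum_subtractf neighbours_def)

lemma laplacian_app_eq_sum_edges:
  "laplacian_app N E \<phi> k = (\<Sum>l<N. if E k l then \<phi> k - \<phi> l else 0)"
  by (simp add: laplacian_app_eq_sum_neighbours sum_neighbours)

lemma sum_edges_swap:
  assumes "simple_graph N E"
  shows "(\<Sum>k<N. \<Sum>l<N. if E k l then f k l else 0) =
         (\<Sum>k<N. \<Sum>l<N. if E k l then f l k else (0::'a::comm_monoid_add))"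
proof -
  have "(\<Sum>k<N. \<Sum>l<N. if E k l then f k l else 0) = (\<Sum>l<N. \<Sum>k<N. if E k l then f k l else 0)"
    by (rule sum.swap)
  also have "\<dots> = (\<Sum>k<N. \<Sum>l<N. if E k l then f l k else 0)"
    using assms by (intro sum.cong refl) (auto simp: simple_graph_def)
  finally show ?thesis .
qed

lemma laplacian_quadratic_form:
  assumes "simple_graph N E"
  shows "(\<Sum>k<N. \<phi> k * laplacian_app N E \<phi> k) =
         (\<Sum>k<N. \<Sum>l<N. if E k l then (\<phi> k - \<phi> l)\<^sup>2 else 0) / 2"
proof -
  define S where "S = (\<Sum>k<N. \<Sum>l<N. if E k l then \<phi> k * (\<phi> k - \<phi> l) else 0)"
  have "(\<Sum>k<N. \<phi> k * laplacian_app N E \<phi> k) = S"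
    unfolding S_def laplacian_app_eq_sum_edges by (simp add: sum_distrib_left if_distrib cong: if_cong)
  moreover have "S + S = S + (\<Sum>k<N. \<Sum>l<N. if E k l then \<phi> l * (\<phi> l - \<phi> k) else 0)"
    unfolding S_def by (subst (2) sum_edges_swap[OF assms]) (rule refl)
  then have "S + S = (\<Sum>k<N. \<Sum>l<N. if E k l then (\<phi> k - \<phi> l)\<^sup>2 else 0)"
    unfolding S_def sum.distrib[symmetric]
    by (auto intro!: sum.cong simp: power2_eq_square algebra_simps)
  ultimately show ?thesis
    by simp
qed

lemma sum_laplacian_app:
  assumes "simple_graph N E"
  shows "(\<Sum>k<N. laplacian_app N E \<phi> k) = 0"
proof -
  define S where "S = (\<Sum>k<N. \<Sum>l<N. if E k l then \<phi> k - \<phi> l else 0)"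
  have "S + S = S + (\<Sum>k<N. \<Sum>l<N. if E k l then \<phi> l - \<phi> k else 0)"
    unfolding S_def by (subst (2) sum_edges_swap[OF assms]) (rule refl)
  then have "S + S = 0"
    unfolding S_def sum.distrib[symmetric] by (auto intro!: sum.neutral)
  then show ?thesis
    by (simp add: S_def laplacian_app_eq_sum_edges)
qed

lemma constant_if_edge_energy_zero:
  assumes "connected_graph N E"
    and energy: "(\<Sum>k<N. \<Sum>l<N. if E k l then (\<psi> k - \<psi> l)\<^sup>2 else 0) = (0::real)"
    and "a < N" "b < N"
  shows "\<psi> a = \<psi> b"
proof -
  have edge: "\<psi> k = \<psi> l" if "k < N" "l < N" "E k l" for k l
  proof -
    have "\<forall>k\<in>{..<N}. \<forall>l\<in>{..<N}. (if E k l then (\<psi> k - \<psi> l)\<^sup>2 else 0) = 0"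
      using energy by (simp add: sum_nonneg sum_nonneg_eq_0_iff)
    then show ?thesis
      using that by force
  qed
  have "(a, b) \<in> (edges_on N E)\<^sup>*"
    using assms unfolding connected_graph_def by blast
  then show ?thesis
    by induction (auto simp: edges_on_def edge)
qed

lemma mat_mult_vec_solvable:
  fixes A :: "'a::field mat"
  assumes A: "A \<in> carrier_mat n n" and "det A \<noteq> 0" and b: "b \<in> carrier_vec n"
  shows "\<exists>x\<in>carrier_vec n. A *\<^sub>v x = b"
proof -
  have "A \<in> Units (ring_mat TYPE('a) n ())"
    by (rule det_non_zero_imp_unit[OF assms(1,2)])
  then obtain B where B: "B \<in> carrier_mat n n" and AB: "A * B = 1\<^sub>m n"
    unfolding Units_def by (auto simp: ring_mat_simps)
  have "A *\<^sub>v (B *\<^sub>v b) = (A * B) *\<^sub>v b"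
    using A B b by simp
  then show ?thesis
    using AB B b by (intro bexI[of _ "B *\<^sub>v b"]) auto
qed

text \<open>Grounding vertex j (adding 1 to its diagonal entry) makes the Laplacian of a connected
  graph nonsingular; solving with the grounded matrix yields solutions of L \<phi> = b for every b
  of zero sum.\<close>

definition grounded_laplacian :: "nat \<Rightarrow> (nat \<Rightarrow> nat \<Rightarrow> bool) \<Rightarrow> nat \<Rightarrow> real mat" where
  "grounded_laplacian N E j =
     mat N N (\<lambda>(k, l). (if k = l then real (deg N E k) + (if k = j then 1 else 0) else 0)
                      - (if E k l then 1 else 0))"

lemma grounded_laplacian_mult_vec:
  assumes "v \<in> carrier_vec N" "k < N"
  shows "(grounded_laplacian N E j *\<^sub>v v) $ k =
         laplacian_app N E (\<lambda>l. v $ l) k + (if k = j then v $ k else 0)"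
proof -
  have "(grounded_laplacian N E j *\<^sub>v v) $ k =
        (\<Sum>l<N. ((if k = l then real (deg N E k) + (if k = j then 1 else 0) else 0)
                 - (if E k l then 1 else 0)) * v $ l)"
    using assms by (simp add: grounded_laplacian_def scalar_prod_def atLeast0LessThan)
  also have "\<dots> = (\<Sum>l<N. if k = l then (real (deg N E k) + (if k = j then 1 else 0)) * v $ l else 0)
                 - (\<Sum>l<N. if E k l then v $ l else 0)"
    unfolding sum_subtractf[symmetric] by (intro sum.cong refl) (auto simp: algebra_simps)
  also have "\<dots> = laplacian_app N E (\<lambda>l. v $ l) k + (if k = j then v $ k else 0)"
    using assms unfolding laplacian_app_def neighbours_def[symmetric] sum_neighbours
    by (simp add: algebra_simps)
  finally show ?thesis .
qed

lemma grounded_laplacian_kernel: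
  assumes "simple_graph N E" "connected_graph N E" "j < N"
    and kernel: "\<And>k. k < N \<Longrightarrow> laplacian_app N E \<psi> k + (if k = j then \<psi> k else 0) = 0"
    and "k < N"
  shows "\<psi> k = 0"
proof -
  define W where "W = (\<Sum>k<N. \<Sum>l<N. if E k l then (\<psi> k - \<psi> l)\<^sup>2 else (0::real))"
  have "0 = (\<Sum>k<N. \<psi> k * (laplacian_app N E \<psi> k + (if k = j then \<psi> k else 0)))"
    using kernel by simp
  also have "\<dots> = (\<Sum>k<N. \<psi> k * laplacian_app N E \<psi> k) + (\<Sum>k<N. if k = j then (\<psi> k)\<^sup>2 else 0)"
    unfolding sum.distrib[symmetric] by (intro sum.cong) (auto simp: algebra_simps power2_eq_square)
  also have "\<dots> = W / 2 + (\<psi> j)\<^sup>2"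
    using \<open>j < N\<close> by (simp add: W_def laplacian_quadratic_form[OF assms(1)])
  finally have "W / 2 + (\<psi> j)\<^sup>2 = 0" ..
  moreover have "W \<ge> 0"
    unfolding W_def by (intro sum_nonneg) auto
  ultimately have "W = 0" "\<psi> j = 0"
    by (auto simp: add_nonneg_eq_0_iff)
  then show ?thesis
    using constant_if_edge_energy_zero[OF assms(2), of \<psi> k j] assms(3,5) by (simp add: W_def)
qed

lemma det_grounded_laplacian_nonzero:
  assumes "simple_graph N E" "connected_graph N E" "j < N"
  shows "det (grounded_laplacian N E j) \<noteq> 0"
proof
  have carrier: "grounded_laplacian N E j \<in> carrier_mat N N"
    by (simp add: grounded_laplacian_def)
  assume "det (grounded_laplacian N E j) = 0"
  then obtain v where v: "v \<in> carrier_vec N" "v \<noteq> 0\<^sub>v N" "grounded_laplacian N E j *\<^sub>v v = 0\<^sub>v N"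
    using det_0_iff_vec_prod_zero_field[OF carrier] by auto
  have "laplacian_app N E (\<lambda>l. v $ l) k + (if k = j then v $ k else 0) = 0" if "k < N" for k
    using grounded_laplacian_mult_vec[OF v(1) that, where E = E and j = j] v(3) that by simp
  then have "v $ k = 0" if "k < N" for k
    using grounded_laplacian_kernel[OF assms] that by blast
  then have "v = 0\<^sub>v N"
    using v(1) by (intro eq_vecI) auto
  with v(2) show False ..
qed

lemma laplacian_solvable:
  fixes b :: "nat \<Rightarrow> real"
  assumes "simple_graph N E" "connected_graph N E" "j < N"
    and "(\<Sum>k<N. b k) = 0"
  shows "\<exists>\<phi>. \<forall>k<N. laplacian_app N E \<phi> k = b k"
proof -
  obtain x where x: "x \<in> carrier_vec N" "grounded_laplacian N E j *\<^sub>v x = vec N b"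
    using mat_mult_vec_solvable[OF _ det_grounded_laplacian_nonzero[OF assms(1-3)], where b = "vec N b"]
    by (auto simp: grounded_laplacian_def)
  define \<phi> where "\<phi> = (\<lambda>l. x $ l)"
  have eq: "laplacian_app N E \<phi> k + (if k = j then \<phi> k else 0) = b k" if "k < N" for k
    using grounded_laplacian_mult_vec[OF x(1) that, where E = E and j = j] x(2) that
    by (simp add: \<phi>_def)
  \<comment> \<open>Summing over k, the Laplacian terms cancel, so the grounding term vanishes.\<close>
  have "(\<Sum>k<N. laplacian_app N E \<phi> k + (if k = j then \<phi> k else 0)) = 0"
    using eq assms(4) by simp
  then have "\<phi> j = 0"
    using assms(3) by (simp add: sum.distrib sum_laplacian_app[OF assms(1)])
  then show ?thesis
    using eq by (metis add.right_neutral)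
qed

definition unit_current_potential ::
    "nat \<Rightarrow> (nat \<Rightarrow> nat \<Rightarrow> bool) \<Rightarrow> nat \<Rightarrow> nat \<Rightarrow> (nat \<Rightarrow> real) \<Rightarrow> bool" where
  "unit_current_potential N E i j \<phi> \<longleftrightarrow>
     (\<forall>k<N. laplacian_app N E \<phi> k = (if k = i then 1 else 0) - (if k = j then 1 else 0))"

lemma unit_current_potential_exists:
  assumes "simple_graph N E" "connected_graph N E" "i < N" "j < N"
  shows "\<exists>\<phi>. unit_current_potential N E i j \<phi>"
  unfolding unit_current_potential_def
  using assms by (intro laplacian_solvable) (auto simp: sum_subtractf)

lemma unit_current_energy:
  assumes "simple_graph N E" "i < N" "j < N" "unit_current_potential N E i j \<phi>"
  shows "(\<Sum>k<N. \<Sum>l<N. if E k l then (\<phi> k - \<phi> l)\<^sup>2 else 0) = 2 * (\<phi> i - \<phi> j)"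
proof -
  have "(\<Sum>k<N. \<phi> k * laplacian_app N E \<phi> k) =
        (\<Sum>k<N. (if k = i then \<phi> k else 0) - (if k = j then \<phi> k else 0))"
    using assms(4) by (intro sum.cong) (auto simp: unit_current_potential_def)
  then show ?thesis
    using assms(2,3) by (simp add: laplacian_quadratic_form[OF assms(1)] sum_subtractf)
qed

lemma sum_square_matrix_ge_two_rows:
  fixes g :: "'a \<Rightarrow> 'a \<Rightarrow> real"
  assumes "finite A" "i \<in> A" "j \<in> A" "i \<noteq> j"
    and sym: "\<And>k l. k \<in> A \<Longrightarrow> l \<in> A \<Longrightarrow> g k l = g l k"
    and nonneg: "\<And>k l. k \<in> A \<Longrightarrow> l \<in> A \<Longrightarrow> 0 \<le> g k l"
    and "g i i = 0" "g j j = 0"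
  shows "2 * ((\<Sum>l\<in>A. g i l) + (\<Sum>l\<in>A. g j l) - g i j) \<le> (\<Sum>k\<in>A. \<Sum>l\<in>A. g k l)"
proof -
  define R where "R = A - {i} - {j}"
  have split: "sum f A = f i + f j + sum f R" for f :: "'a \<Rightarrow> real"
    using assms(1-4) by (simp add: R_def sum.remove[of A i] sum.remove[of "A - {i}" j])
  have "g k i + g k j \<le> (\<Sum>l\<in>A. g k l)" if "k \<in> R" for k
    using split[of "g k"] sum_nonneg[of R "g k"] nonneg that by (auto simp: R_def)
  then have "(\<Sum>k\<in>R. g k i + g k j) \<le> (\<Sum>k\<in>R. \<Sum>l\<in>A. g k l)"
    by (rule sum_mono)
  moreover have "(\<Sum>k\<in>A. g k m) = (\<Sum>l\<in>A. g m l)" if "m \<in> A" for m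
    using sym that by (intro sum.cong) auto
  then have "(\<Sum>k\<in>R. g k i + g k j) = (\<Sum>l\<in>A. g i l) + (\<Sum>l\<in>A. g j l) - 2 * g i j"
    using split[of "\<lambda>k. g k i"] split[of "\<lambda>k. g k j"] sym[of i j] assms(2,3,7,8)
    by (simp add: sum.distrib)
  moreover have "(\<Sum>k\<in>A. \<Sum>l\<in>A. g k l) = (\<Sum>l\<in>A. g i l) + (\<Sum>l\<in>A. g j l) + (\<Sum>k\<in>R. \<Sum>l\<in>A. g k l)"
    by (rule split)
  ultimately show ?thesis
    by (simp add: algebra_simps)
qed

lemma potential_drop_ge_endpoint_energy:
  assumes "simple_graph N E" "i < N" "j < N" "i \<noteq> j" "unit_current_potential N E i j \<phi>"
  shows "(\<Sum>l\<in>neighbours N E i. (\<phi> i - \<phi> l)\<^sup>2) + (\<Sum>l\<in>neighbours N E j. (\<phi> j - \<phi> l)\<^sup>2)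
         - (if E i j then (\<phi> i - \<phi> j)\<^sup>2 else 0) \<le> \<phi> i - \<phi> j"
proof -
  define g where "g k l = (if E k l then (\<phi> k - \<phi> l)\<^sup>2 else 0)" for k l
  have "2 * ((\<Sum>l<N. g i l) + (\<Sum>l<N. g j l) - g i j) \<le> (\<Sum>k<N. \<Sum>l<N. g k l)"
    using assms(1-4) unfolding g_def simple_graph_def
    by (intro sum_square_matrix_ge_two_rows) (auto simp: power2_commute)
  then show ?thesis
    using unit_current_energy[OF assms(1,2,3,5)] by (simp add: g_def sum_neighbours)
qed

lemma square_sum_remove_le:
  fixes y :: "'a \<Rightarrow> real"
  assumes "finite S" "m \<in> S"
  shows "(sum y S - y m)\<^sup>2 \<le> (real (card S) - 1) * ((\<Sum>l\<in>S. (y l)\<^sup>2) - (y m)\<^sup>2)"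
proof -
  have "card S > 0"
    using assms card_gt_0_iff by blast
  then have "real (card (S - {m})) = real (card S) - 1"
    using assms by (simp add: card_Diff_singleton of_nat_diff Suc_le_eq)
  then show ?thesis
    using sum_squared_le_sum_of_squares[of y "S - {m}"] assms by (simp add: sum_diff1 mult.commute)
qed

text \<open>For adjacent i and j: x = R_ij, a = d_i - 1, b = d_j - 1, and u, v are the energies of the
  remaining edges at i and at j.\<close>

lemma adjacent_potential_drop_bound:
  fixes a b x u v :: real
  assumes "0 \<le> a" "0 \<le> b" and drop: "x\<^sup>2 + u + v \<le> x"
    and u: "(1 - x)\<^sup>2 \<le> a * u" and v: "(1 - x)\<^sup>2 \<le> b * v"
  shows "(a + b) / ((a + 1) * (b + 1)) \<le> x"
proof (cases "1 \<le> x")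
  case True
  have "(a + b) / ((a + 1) * (b + 1)) \<le> 1"
    using assms(1,2) by (simp add: divide_le_eq_1 algebra_simps add_nonneg_nonneg add_pos_nonneg)
  with True show ?thesis
    by linarith
next
  case False
  then have "a > 0" "b > 0"
    using assms(1,2) u v by (auto simp: less_le)
  then have "(1 - x)\<^sup>2 / a \<le> u" "(1 - x)\<^sup>2 / b \<le> v"
    using u v by (simp_all add: divide_le_eq mult.commute)
  then have "(1 - x) * ((1 - x) * (1 / a + 1 / b)) \<le> (1 - x) * x"
    using drop by (simp add: power2_eq_square algebra_simps add_divide_distrib)
  then have "(1 - x) * (1 / a + 1 / b) \<le> x"
    using False by (simp add: mult_le_cancel_left)
  then have bound: "a + b \<le> x * (a * b + a + b)"
    using \<open>a > 0\<close> \<open>b > 0\<close> by (simp add: field_simps)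
  moreover have "0 < a * b + a + b"
    using \<open>a > 0\<close> \<open>b > 0\<close> by (simp add: add_pos_pos)
  ultimately have "0 < x"
    using \<open>a > 0\<close> \<open>b > 0\<close> by (intro zero_less_mult_pos2[of x "a * b + a + b"]) simp_all
  have "a + b \<le> x * ((a + 1) * (b + 1))"
    using bound \<open>0 < x\<close> by (simp add: algebra_simps)
  then show ?thesis
    using \<open>a > 0\<close> \<open>b > 0\<close> by (simp add: divide_le_eq mult.commute add_pos_pos)
qed

lemma potential_drop_ge:
  assumes "simple_graph N E" "i < N" "j < N" "i \<noteq> j" "unit_current_potential N E i j \<phi>"
  shows "1 / real (deg N E i) + 1 / real (deg N E j)
           - (if E i j then 2 / (real (deg N E i) * real (deg N E j)) else 0) \<le> \<phi> i - \<phi> j"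
proof -
  define x where "x = \<phi> i - \<phi> j"
  define T where "T k = (\<Sum>l\<in>neighbours N E k. (\<phi> k - \<phi> l)\<^sup>2)" for k
  define d where "d k = real (deg N E k)" for k
  have drop: "T i + T j - (if E i j then x\<^sup>2 else 0) \<le> x"
    using potential_drop_ge_endpoint_energy[OF assms] unfolding T_def x_def .
  have out_i: "(\<Sum>l\<in>neighbours N E i. \<phi> i - \<phi> l) = 1"
    and out_j: "(\<Sum>l\<in>neighbours N E j. \<phi> j - \<phi> l) = -1"
    using assms(2-5) by (simp_all add: unit_current_potential_def flip: laplacian_app_eq_sum_neighbours)
  show ?thesis
  proof (cases "E i j")
    case False
    have endpoint: "1 / d k \<le> T k" if "(\<Sum>l\<in>neighbours N E k. \<phi> k - \<phi> l)\<^sup>2 = 1" for k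
    proof -
      have "1 \<le> T k * d k"
        using sum_squared_le_sum_of_squares[of "\<lambda>l. \<phi> k - \<phi> l" "neighbours N E k"] that
        by (simp add: T_def d_def deg_eq_card_neighbours)
      then show ?thesis
        by (cases "d k = 0") (auto simp: field_simps d_def)
    qed
    show ?thesis
      using drop False endpoint[of i] endpoint[of j] out_i out_j by (simp add: x_def d_def)
  next
    case True
    have "j \<in> neighbours N E i" "i \<in> neighbours N E j"
      using True assms(1-3) by (auto simp: neighbours_def simple_graph_def)
    then have "1 \<le> d i" "1 \<le> d j"
      by (auto simp: d_def deg_eq_card_neighbours Suc_le_eq card_gt_0_iff)
    have "(-1 - (\<phi> j - \<phi> i))\<^sup>2 = (1 - x)\<^sup>2" "(\<phi> j - \<phi> i)\<^sup>2 = x\<^sup>2"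
      by (simp_all add: x_def power2_eq_square algebra_simps)
    then have "(1 - x)\<^sup>2 \<le> (d i - 1) * (T i - x\<^sup>2)" "(1 - x)\<^sup>2 \<le> (d j - 1) * (T j - x\<^sup>2)"
      using square_sum_remove_le[OF _ \<open>j \<in> neighbours N E i\<close>, of "\<lambda>l. \<phi> i - \<phi> l"]
            square_sum_remove_le[OF _ \<open>i \<in> neighbours N E j\<close>, of "\<lambda>l. \<phi> j - \<phi> l"] out_i out_j
      by (simp_all add: T_def d_def deg_eq_card_neighbours x_def)
    then have "(d i - 1 + (d j - 1)) / ((d i - 1 + 1) * (d j - 1 + 1)) \<le> x"
      using drop True \<open>1 \<le> d i\<close> \<open>1 \<le> d j\<close>
      by (intro adjacent_potential_drop_bound[where u = "T i - x\<^sup>2" and v = "T j - x\<^sup>2"])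
         (simp_all add: algebra_simps)
    moreover have "(d i - 1 + (d j - 1)) / ((d i - 1 + 1) * (d j - 1 + 1))
                   = 1 / d i + 1 / d j - 2 / (d i * d j)"
      using \<open>1 \<le> d i\<close> \<open>1 \<le> d j\<close> by (simp add: field_simps)
    ultimately show ?thesis
      using True by (simp add: x_def d_def)
  qed
qed

lemma eff_res_ge:
  assumes "simple_graph N E" "connected_graph N E" "i < N" "j < N" "i \<noteq> j"
  shows "1 / real (deg N E i) + 1 / real (deg N E j)
           - (if E i j then 2 / (real (deg N E i) * real (deg N E j)) else 0) \<le> eff_res N E i j"
proof -
  define \<phi> where "\<phi> = (SOME \<phi>. unit_current_potential N E i j \<phi>)"
  have "unit_current_potential N E i j \<phi>"
    unfolding \<phi>_def using unit_current_potential_exists[OF assms(1-4)] by (rule someI_ex)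
  moreover have "eff_res N E i j = \<phi> i - \<phi> j"
    unfolding eff_res_def \<phi>_def unit_current_potential_def Let_def ..
  ultimately show ?thesis
    using potential_drop_ge[OF assms(1,3-5)] by simp
qed

lemma connected_deg_pos:
  assumes "connected_graph N E" "k < N" "m < N" "k \<noteq> m"
  shows "0 < deg N E k"
proof -
  have "(k, m) \<in> (edges_on N E)\<^sup>*"
    using assms connected_graph_def by blast
  then obtain l where "(k, l) \<in> edges_on N E"
    using assms(4) by (auto elim: converse_rtranclE)
  then have "l \<in> neighbours N E k"
    by (simp add: edges_on_def neighbours_def)
  then show ?thesis
    by (auto simp: deg_eq_card_neighbours card_gt_0_iff)
qed

lemma sum_upper_pairs_sym:
  fixes f :: "nat \<Rightarrow> nat \<Rightarrow> 'a::ab_group_add"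
  shows "(\<Sum>i<N. \<Sum>j\<in>{i<..<N}. f i j + f j i) = (\<Sum>i<N. \<Sum>j<N. f i j) - (\<Sum>i<N. f i i)"
proof (induction N)
  case 0
  then show ?case by simp
next
  case (Suc N)
  have "{i<..<Suc N} = insert N {i<..<N}" if "i < N" for i
    using that by auto
  moreover have "{N<..<Suc N} = {}"
    by auto
  ultimately have "(\<Sum>i<Suc N. \<Sum>j\<in>{i<..<Suc N}. f i j + f j i)
             = (\<Sum>i<N. f i N + f N i) + (\<Sum>i<N. \<Sum>j\<in>{i<..<N}. f i j + f j i)"
    by (simp add: sum.lessThan_Suc sum.distrib)
  then show ?case
    unfolding Suc.IH by (simp add: sum.lessThan_Suc sum.distrib algebra_simps)
qed

lemma card_upper_pairs:
  "real (card (SIGMA i:{..<N}. {i<..<N})) = real N * (real N - 1) / 2"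
proof -
  define S where "S = (\<Sum>i<N. \<Sum>j\<in>{i<..<N}. (1::real))"
  have "real (card (SIGMA i:{..<N}. {i<..<N})) = S"
    unfolding S_def by (subst sum.Sigma) auto
  moreover have "S + S = real N * real N - real N"
    using sum_upper_pairs_sym[of "\<lambda>_ _. 1 :: real" N] unfolding S_def sum.distrib by simp
  moreover have "real N * (real N - 1) = real N * real N - real N"
    by (simp add: algebra_simps)
  ultimately show ?thesis
    by linarith
qed

lemma card_squared_div_sum_le_sum_inverse:
  fixes f :: "'a \<Rightarrow> real"
  assumes "\<And>x. x \<in> A \<Longrightarrow> 0 < f x"
  shows "(real (card A))\<^sup>2 / (\<Sum>x\<in>A. f x) \<le> (\<Sum>x\<in>A. 1 / f x)"
proof -
  have "(\<Sum>x\<in>A. sqrt (f x) * (1 / sqrt (f x)))\<^sup>2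
        \<le> (\<Sum>x\<in>A. (sqrt (f x))\<^sup>2) * (\<Sum>x\<in>A. (1 / sqrt (f x))\<^sup>2)"
    by (rule Cauchy_Schwarz_ineq_sum)
  moreover have "(\<Sum>x\<in>A. sqrt (f x) * (1 / sqrt (f x))) = (\<Sum>x\<in>A. 1)"
    by (intro sum.cong refl) (simp add: assms[THEN less_imp_neq, THEN not_sym])
  ultimately have "(real (card A))\<^sup>2 \<le> (\<Sum>x\<in>A. f x) * (\<Sum>x\<in>A. 1 / f x)"
    using assms by (simp add: power_divide less_imp_le)
  moreover have "0 \<le> (\<Sum>x\<in>A. f x)" "0 \<le> (\<Sum>x\<in>A. 1 / f x)"
    using assms by (simp_all add: sum_nonneg less_imp_le)
  ultimately show ?thesis
    by (cases "(\<Sum>x\<in>A. f x) = 0") (simp_all add: divide_le_eq mult.commute)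
qed

lemma sum_edges_inverse_degrees:
  assumes "simple_graph N E" and pos: "\<And>k. k < N \<Longrightarrow> 0 < deg N E k"
  shows "(\<Sum>i<N. \<Sum>j\<in>{i<..<N}. if E i j then 1 / real (deg N E i) + 1 / real (deg N E j) else 0)
         = real N"
proof -
  define f where "f i j = (if E i j then 1 / real (deg N E j) else 0)" for i j
  have "(\<Sum>i<N. \<Sum>j<N. f i j) = (\<Sum>j<N. (\<Sum>i<N. if E j i then 1 else 0) / real (deg N E j))"
    using assms(1) unfolding f_def simple_graph_def
    by (subst sum.swap) (auto simp: sum_divide_distrib intro!: sum.cong)
  also have "\<dots> = (\<Sum>j<N. 1)"
  proof (intro sum.cong refl)
    fix j
    assume "j \<in> {..<N}"
    moreover have "(\<Sum>i<N. if E j i then 1 else 0) = real (deg N E j)"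
      using sum_neighbours[where f = "\<lambda>_. 1 :: real" and N = N and E = E and k = j]
      by (simp add: deg_eq_card_neighbours)
    ultimately show "(\<Sum>i<N. if E j i then 1 else 0) / real (deg N E j) = 1"
      using pos by simp
  qed
  finally have total: "(\<Sum>i<N. \<Sum>j<N. f i j) = real N"
    by simp
  have diagonal: "(\<Sum>i<N. f i i) = 0"
    using assms(1) by (simp add: f_def simple_graph_def)
  have "f i j + f j i = (if E i j then 1 / real (deg N E i) + 1 / real (deg N E j) else 0)"
    if "i < N" "j < N" for i j
    using assms(1) that by (auto simp: f_def simple_graph_def)
  then have "(\<Sum>i<N. \<Sum>j\<in>{i<..<N}. if E i j then 1 / real (deg N E i) + 1 / real (deg N E j) else 0)
             = (\<Sum>i<N. \<Sum>j\<in>{i<..<N}. f i j + f j i)"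
    by (intro sum.cong refl) auto
  also have "\<dots> = real N"
    unfolding sum_upper_pairs_sym total diagonal by simp
  finally show ?thesis .
qed

lemma add_deg_kirchhoff_ge:
  assumes "simple_graph N E" "connected_graph N E" "2 \<le> N"
  shows "real N * (real N - 3)
         + (\<Sum>i<N. \<Sum>j\<in>{i<..<N}. real (deg N E j) / real (deg N E i))
         + (\<Sum>i<N. \<Sum>j\<in>{i<..<N}. real (deg N E i) / real (deg N E j))
         \<le> add_deg_kirchhoff N E"
proof -
  define d where "d k = real (deg N E k)" for k
  have pos: "0 < deg N E k" if "k < N" for k
    using connected_deg_pos[OF assms(2) that, of "if k = 0 then 1 else 0"] assms(3) by auto
  have edges: "(\<Sum>i<N. \<Sum>j\<in>{i<..<N}. if E i j then 1 / d i + 1 / d j else 0) = real N"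
    unfolding d_def by (rule sum_edges_inverse_degrees[OF assms(1) pos])
  have pairs: "(\<Sum>i<N. \<Sum>j\<in>{i<..<N}. (2::real)) = real N * real N - real N"
    using sum_upper_pairs_sym[of "\<lambda>_ _. 1 :: real" N] by simp
  have "real N * (real N - 3) + (\<Sum>i<N. \<Sum>j\<in>{i<..<N}. d j / d i) + (\<Sum>i<N. \<Sum>j\<in>{i<..<N}. d i / d j)
        = (\<Sum>i<N. \<Sum>j\<in>{i<..<N}. 2)
          + ((\<Sum>i<N. \<Sum>j\<in>{i<..<N}. d j / d i) + (\<Sum>i<N. \<Sum>j\<in>{i<..<N}. d i / d j))
          - 2 * (\<Sum>i<N. \<Sum>j\<in>{i<..<N}. if E i j then 1 / d i + 1 / d j else 0)"
    unfolding pairs edges by (simp add: algebra_simps)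
  also have "\<dots> = (\<Sum>i<N. \<Sum>j\<in>{i<..<N}.
                     2 + (d j / d i + d i / d j) - 2 * (if E i j then 1 / d i + 1 / d j else 0))"
    by (simp only: sum.distrib sum_subtractf sum_distrib_left)
  also have "\<dots> = (\<Sum>i<N. \<Sum>j\<in>{i<..<N}.
                     (d i + d j) * (1 / d i + 1 / d j - (if E i j then 2 / (d i * d j) else 0)))"
    using pos by (intro sum.cong refl) (auto simp: d_def field_simps)
  also have "\<dots> \<le> add_deg_kirchhoff N E"
    unfolding add_deg_kirchhoff_def
  proof (intro sum_mono)
    fix i j
    assume "i \<in> {..<N}" "j \<in> {i<..<N}"
    then have "1 / d i + 1 / d j - (if E i j then 2 / (d i * d j) else 0) \<le> eff_res N E i j"
      unfolding d_def by (intro eff_res_ge[OF assms(1,2)]) auto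
    then show "(d i + d j) * (1 / d i + 1 / d j - (if E i j then 2 / (d i * d j) else 0))
               \<le> real (deg N E i + deg N E j) * eff_res N E i j"
      by (simp add: d_def mult_left_mono)
  qed
  finally show ?thesis
    unfolding d_def .
qed

theorem theorem4:
  fixes N :: nat and E :: "nat \<Rightarrow> nat \<Rightarrow> bool"
  assumes "simple_graph N E"
    and "connected_graph N E"
    and "\<And>i j. i \<le> j \<Longrightarrow> j < N \<Longrightarrow> deg N E i \<le> deg N E j"
  shows "add_deg_kirchhoff N E \<ge>
           real N * (real N - 3)
         + (\<Sum>i<N. \<Sum>j\<in>{i<..<N}. real (deg N E j) / real (deg N E i))
         + (real N * (real N - 1) / 2)^2
           / (\<Sum>i<N. \<Sum>j\<in>{i<..<N}. real (deg N E j) / real (deg N E i))"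
proof (cases "2 \<le> N")
  case False
  then have "N = 0 \<or> N = 1"
    by auto
  moreover have "{0::nat<..<1} = {}"
    by auto
  ultimately show ?thesis
    by (auto simp: add_deg_kirchhoff_def)
next
  case True
  define P where "P = (SIGMA i:{..<N}. {i<..<N})"
  define r where "r = (\<lambda>(i, j). real (deg N E j) / real (deg N E i))"
  have "0 < r p" if "p \<in> P" for p
    using that True connected_deg_pos[OF assms(2), of "fst p" "snd p"]
      connected_deg_pos[OF assms(2), of "snd p" "fst p"]
    by (auto simp: P_def r_def split: prod.split)
  then have "(real (card P))\<^sup>2 / (\<Sum>p\<in>P. r p) \<le> (\<Sum>p\<in>P. 1 / r p)"
    by (rule card_squared_div_sum_le_sum_inverse)
  moreover have "(\<Sum>i<N. \<Sum>j\<in>{i<..<N}. real (deg N E j) / real (deg N E i)) = (\<Sum>p\<in>P. r p)"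
    unfolding P_def r_def by (rule sum.Sigma) auto
  moreover have "(\<Sum>i<N. \<Sum>j\<in>{i<..<N}. real (deg N E i) / real (deg N E j)) = (\<Sum>p\<in>P. 1 / r p)"
    unfolding P_def r_def by (subst sum.Sigma) (auto simp: split_def)
  ultimately have "(real N * (real N - 1) / 2)^2 / (\<Sum>i<N. \<Sum>j\<in>{i<..<N}. real (deg N E j) / real (deg N E i))
             \<le> (\<Sum>i<N. \<Sum>j\<in>{i<..<N}. real (deg N E i) / real (deg N E j))"
    by (simp only: P_def card_upper_pairs)
  then show ?thesis
    using add_deg_kirchhoff_ge[OF assms(1,2) True] by linarith
qed

end
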